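(* Let $\mathfrak g$ be the $7$-dimensional real Lie algebra described in the context, with parameters $x,y,z,w$ and $A,B,C$, and let $\varphi=e^{127}+e^{347}+e^{567}+e^{135}-e^{146}-e^{236}-e^{245}$. Then $d\varphi=0$ if and only if $$\theta(A)\omega_1=\theta(B)\omega_7+x\omega_1+y\omega_2,\qquad \theta(A)\omega_2=\theta(C)\omega_7+z\omega_1+w\omega_2,\qquad \theta(B)\omega_2=\theta(C)\omega_1.$$
   Context: Let $\mathfrak g$ be a real Lie algebra with basis $\{e_1,\dots,e_7\}$ and dual basis $\{e^1,\dots,e^7\}$; write $e^{ij\cdots k}=e^i\wedge\cdots\wedge e^k$. Put $\mathfrak g_1=\mathrm{span}\{e_3,e_4,e_5,e_6\}$. The bracket is determined by $x,y,z,w\in\mathbb R$ and $A,B,C\in\mathfrak{gl}_4(\mathbb R)$ (matrices w.r.t. $e_3,\dots,e_6$) by: $[e_1,e_2]=0$, $[e_7,e_1]=xe_1+ye_2$, $[e_7,e_2]=ze_1+we_2$, $[e_7,v]=Av$, $[e_1,v]=Bv$, $[e_2,v]=Cv$ for $v\in\mathfrak g_1$, $[\mathfrak g_1,\mathfrak g_1]=0$; it is assumed that $\mathrm{tr}B=\mathrm{tr}C=0$, $[A,B]=xB+yC$, $[A,C]=zB+wC$, $[B,C]=0$. The exterior derivative on $\Lambda^k\mathfrak g^*$ is $d\alpha(X_0,\dots,X_k)=\sum_{i<j}(-1)^{i+j}\alpha([X_i,X_j],X_0,\dots,\widehat{X_i},\dots,\widehat{X_j},\dots,X_k)$. $\omega_7=e^{34}+e^{56}$,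 $\omega_1=e^{35}-e^{46}$, $\omega_2=-e^{36}-e^{45}$, regarded as elements of $\Lambda^2\mathfrak g_1^*$. For $M\in\mathfrak{gl}_4(\mathbb R)$, $\theta(M)$ is the derivation of $\Lambda\mathfrak g_1^*$ given by $\theta(M)\alpha(X_1,\dots,X_k)=-\sum_i\alpha(X_1,\dots,MX_i,\dots,X_k)$. *)

theory Defs
  imports Complex_Main "HOL-Combinatorics.Permutations"
begin

text \<open>Vectors of the Lie algebra g are coordinate functions w.r.t. e_1,...,e_7
  (indices 1..7); g_1 = span{e_3,...,e_6} corresponds to support in {3..6}.
  Matrices in gl_4(R) are indexed by {3..6} x {3..6}: entry M k j is the
  e_k-coordinate of M e_j.\<close>

type_synonym vec = "nat \<Rightarrow> real"
type_synonym mat4 = "nat \<Rightarrow> nat \<Rightarrow> real"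
type_synonym form = "vec list \<Rightarrow> real"

definition in_g :: "vec \<Rightarrow> bool" where
  "in_g X \<longleftrightarrow> (\<forall>i. i \<notin> {1..7} \<longrightarrow> X i = 0)"

definition in_g1 :: "vec \<Rightarrow> bool" where
  "in_g1 X \<longleftrightarrow> (\<forall>i. i \<notin> {3..6} \<longrightarrow> X i = 0)"

definition bvec :: "nat \<Rightarrow> vec" where
  "bvec i = (\<lambda>j. if j = i then 1 else 0)"

definition matapp :: "mat4 \<Rightarrow> vec \<Rightarrow> vec" where
  "matapp M X = (\<lambda>k. if k \<in> {3..6} then (\<Sum>j\<in>{3..6}. M k j * X j) else 0)"

definition mtrace :: "mat4 \<Rightarrow> real" where
  "mtrace M = (\<Sum>k\<in>{3..6}. M k k)"

definition mmul :: "mat4 \<Rightarrow> mat4 \<Rightarrow> mat4" where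
  "mmul M N = (\<lambda>i k. \<Sum>j\<in>{3..6}. M i j * N j k)"

definition mcomm :: "mat4 \<Rightarrow> mat4 \<Rightarrow> mat4" where
  "mcomm M N = (\<lambda>i k. mmul M N i k - mmul N M i k)"

text \<open>One-directional basis brackets [e_i,e_j] for the listed pairs (zero otherwise).\<close>
definition ad0 :: "real \<Rightarrow> real \<Rightarrow> real \<Rightarrow> real \<Rightarrow> mat4 \<Rightarrow> mat4 \<Rightarrow> mat4 \<Rightarrow> nat \<Rightarrow> nat \<Rightarrow> vec" where
  "ad0 x y z w A B C i j =
    (if i = 7 \<and> j = 1 then (\<lambda>k. x * bvec 1 k + y * bvec 2 k)
     else if i = 7 \<and> j = 2 then (\<lambda>k. z * bvec 1 k + w * bvec 2 k)
     else if i = 7 \<and> j \<in> {3..6} then matapp A (bvec j)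
     else if i = 1 \<and> j \<in> {3..6} then matapp B (bvec j)
     else if i = 2 \<and> j \<in> {3..6} then matapp C (bvec j)
     else (\<lambda>k. 0))"

definition brb :: "real \<Rightarrow> real \<Rightarrow> real \<Rightarrow> real \<Rightarrow> mat4 \<Rightarrow> mat4 \<Rightarrow> mat4 \<Rightarrow> nat \<Rightarrow> nat \<Rightarrow> vec" where
  "brb x y z w A B C i j = (\<lambda>k. ad0 x y z w A B C i j k - ad0 x y z w A B C j i k)"

definition lie_br :: "real \<Rightarrow> real \<Rightarrow> real \<Rightarrow> real \<Rightarrow> mat4 \<Rightarrow> mat4 \<Rightarrow> mat4 \<Rightarrow> vec \<Rightarrow> vec \<Rightarrow> vec" where
  "lie_br x y z w A B C X Y =
     (\<lambda>k. \<Sum>i\<in>{1..7}. \<Sum>j\<in>{1..7}. X i * Y j * brb x y z w A B C i j k)"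

definition eform :: "nat list \<Rightarrow> form" where
  "eform is Xs = (\<Sum>\<sigma>\<in>{\<sigma>. \<sigma> permutes {..<length is}}.
       of_int (sign \<sigma>) * (\<Prod>r<length is. (Xs ! (\<sigma> r)) (is ! r)))"

text \<open>Exterior derivative on g, formula from the context (X_0,...,X_k 0-indexed).\<close>
definition dext :: "real \<Rightarrow> real \<Rightarrow> real \<Rightarrow> real \<Rightarrow> mat4 \<Rightarrow> mat4 \<Rightarrow> mat4 \<Rightarrow> form \<Rightarrow> form" where
  "dext x y z w A B C \<alpha> Xs =
    (\<Sum>i<length Xs. \<Sum>j\<in>{i<..<length Xs}.
       (-1) ^ (i + j) * \<alpha> (lie_br x y z w A B C (Xs ! i) (Xs ! j)
                         # [Xs ! m. m \<leftarrow> [0..<length Xs], m \<noteq> i, m \<noteq> j]))"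

definition theta :: "mat4 \<Rightarrow> form \<Rightarrow> form" where
  "theta M \<alpha> Xs = - (\<Sum>i<length Xs. \<alpha> (Xs[i := matapp M (Xs ! i)]))"

definition phi :: form where
  "phi Xs = eform [1,2,7] Xs + eform [3,4,7] Xs + eform [5,6,7] Xs + eform [1,3,5] Xs
          - eform [1,4,6] Xs - eform [2,3,6] Xs - eform [2,4,5] Xs"

definition omega7 :: form where "omega7 Xs = eform [3,4] Xs + eform [5,6] Xs"
definition omega1 :: form where "omega1 Xs = eform [3,5] Xs - eform [4,6] Xs"
definition omega2 :: form where "omega2 Xs = - eform [3,6] Xs - eform [4,5] Xs"

end

theory Submission
  imports Defs
begin

(* Expanding the Koszul formula gives
     d phi = e^12 \<wedge> dphi_comp12 + e^71 \<wedge> dphi_comp71 + e^72 \<wedge> dphi_comp72,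
   where the three 2-forms are the differences of the two sides of the three equations and only
   see the g_1-components of their arguments. Evaluating on (e1, e2, X, Y), (e7, e1, X, Y) and
   (e7, e2, X, Y) with X, Y in g_1 recovers them, so d phi = 0 exactly when all three vanish on
   g_1. *)

lemma sum_3_6: "sum f {3..6::nat} = f 3 + f 4 + f 5 + (f 6::real)"
proof -
  have "{3..6::nat} = {3, 4, 5, 6}" by auto
  then show ?thesis by (simp add: algebra_simps)
qed

lemma sum_1_7: "sum f {1..7::nat} = f 1 + f 2 + sum f {3..6} + (f 7::real)"
proof -
  have "{1..7::nat} = {1, 2, 3, 4, 5, 6, 7}" by auto
  then show ?thesis by (simp add: sum_3_6 algebra_simps)
qed

lemma lie_br_eq:
  "lie_br x y z w A B C X Y =
    (\<lambda>k. (X 7 * Y 1 - X 1 * Y 7) * (x * bvec 1 k + y * bvec 2 k)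
       + (X 7 * Y 2 - X 2 * Y 7) * (z * bvec 1 k + w * bvec 2 k)
       + X 7 * matapp A Y k - Y 7 * matapp A X k
       + X 1 * matapp B Y k - Y 1 * matapp B X k
       + X 2 * matapp C Y k - Y 2 * matapp C X k)"
  unfolding lie_br_def brb_def sum_1_7
  by (auto simp: ad0_def matapp_def bvec_def sum_3_6 algebra_simps)

lemma eform_pair: "eform [a, b] [U, V] = U a * V b - V a * U b"
proof -
  have fin: "finite {1::nat}" "0 \<notin> {1::nat}" by auto
  have dom: "{..<length [a, b]} = insert 0 {1::nat}" by auto
  show ?thesis
    unfolding eform_def dom sum_over_permutations_insert[OF fin] permutes_sing
    by (simp add: sign_swap_id swap_id_eq lessThan_Suc)
qed

lemma eform_triple: "eform [a, b, c] [U, V, W] =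
    U a * V b * W c + V a * W b * U c + W a * U b * V c
  - U a * W b * V c - V a * U b * W c - W a * V b * U c"
proof -
  have fin1: "finite {1::nat, 2}" "0 \<notin> {1::nat, 2}" by auto
  have fin2: "finite {2::nat}" "1 \<notin> {2::nat}" by auto
  have dom: "{..<length [a, b, c]} = insert 0 {1::nat, 2}" by auto
  show ?thesis
    unfolding eform_def dom sum_over_permutations_insert[OF fin1]
      sum_over_permutations_insert[OF fin2] permutes_sing
    by (simp add: sign_swap_id permutation_swap_id sign_compose swap_id_eq lessThan_Suc
        algebra_simps)
qed

lemma theta_pair: "theta M \<alpha> [X, Y] = - (\<alpha> [matapp M X, Y] + \<alpha> [X, matapp M Y])"
  unfolding theta_def by (simp add: lessThan_Suc)

lemma dext_quadruple:
  "dext x y z w A B C \<alpha> [X0, X1, X2, X3] =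
     - \<alpha> [lie_br x y z w A B C X0 X1, X2, X3] + \<alpha> [lie_br x y z w A B C X0 X2, X1, X3]
     - \<alpha> [lie_br x y z w A B C X0 X3, X1, X2] - \<alpha> [lie_br x y z w A B C X1 X2, X0, X3]
     + \<alpha> [lie_br x y z w A B C X1 X3, X0, X2] - \<alpha> [lie_br x y z w A B C X2 X3, X0, X1]"
  unfolding dext_def
  by (simp add: numeral_eq_Suc lessThan_Suc atLeastSucLessThan_greaterThanLessThan[symmetric]
      atLeastLessThanSuc upt_rec algebra_simps)

definition wedge2 :: "form \<Rightarrow> form \<Rightarrow> form" where
  "wedge2 \<alpha> \<beta> Xs =
       \<alpha> [Xs ! 0, Xs ! 1] * \<beta> [Xs ! 2, Xs ! 3] - \<alpha> [Xs ! 0, Xs ! 2] * \<beta> [Xs ! 1, Xs ! 3]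
     + \<alpha> [Xs ! 0, Xs ! 3] * \<beta> [Xs ! 1, Xs ! 2] + \<alpha> [Xs ! 1, Xs ! 2] * \<beta> [Xs ! 0, Xs ! 3]
     - \<alpha> [Xs ! 1, Xs ! 3] * \<beta> [Xs ! 0, Xs ! 2] + \<alpha> [Xs ! 2, Xs ! 3] * \<beta> [Xs ! 0, Xs ! 1]"

definition dphi_comp12 :: "mat4 \<Rightarrow> mat4 \<Rightarrow> form" where
  "dphi_comp12 B C Xs = theta B omega2 Xs - theta C omega1 Xs"

definition dphi_comp71 :: "real \<Rightarrow> real \<Rightarrow> mat4 \<Rightarrow> mat4 \<Rightarrow> form" where
  "dphi_comp71 x y A B Xs = theta A omega1 Xs - theta B omega7 Xs - x * omega1 Xs - y * omega2 Xs"

definition dphi_comp72 :: "real \<Rightarrow> real \<Rightarrow> mat4 \<Rightarrow> mat4 \<Rightarrow> form" where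
  "dphi_comp72 z w A C Xs = theta A omega2 Xs - theta C omega7 Xs - z * omega1 Xs - w * omega2 Xs"

lemma dext_phi_decomposition:
  "dext x y z w A B C phi [X0, X1, X2, X3] =
       wedge2 (eform [1, 2]) (dphi_comp12 B C) [X0, X1, X2, X3]
     + wedge2 (eform [7, 1]) (dphi_comp71 x y A B) [X0, X1, X2, X3]
     + wedge2 (eform [7, 2]) (dphi_comp72 z w A C) [X0, X1, X2, X3]"
  unfolding dext_quadruple phi_def eform_triple lie_br_eq wedge2_def dphi_comp12_def
    dphi_comp71_def dphi_comp72_def theta_pair omega1_def omega2_def omega7_def eform_pair
  by (simp add: matapp_def bvec_def sum_3_6) algebra

lemma in_g_bvec: "i \<in> {1..7} \<Longrightarrow> in_g (bvec i)"
  by (simp add: in_g_def bvec_def)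

lemma in_g1_imp_in_g: "in_g1 X \<Longrightarrow> in_g X"
  by (auto simp: in_g_def in_g1_def)

lemma in_g1_zero_coords: "in_g1 X \<Longrightarrow> X 1 = 0 \<and> X 2 = 0 \<and> X 7 = 0"
  by (simp add: in_g1_def)

lemma dext_phi_e1_e2:
  assumes "in_g1 X" "in_g1 Y"
  shows "dext x y z w A B C phi [bvec 1, bvec 2, X, Y] = dphi_comp12 B C [X, Y]"
  using in_g1_zero_coords[OF assms(1)] in_g1_zero_coords[OF assms(2)]
  unfolding dext_phi_decomposition wedge2_def eform_pair by (simp add: bvec_def)

lemma dext_phi_e7_e1:
  assumes "in_g1 X" "in_g1 Y"
  shows "dext x y z w A B C phi [bvec 7, bvec 1, X, Y] = dphi_comp71 x y A B [X, Y]"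
  using in_g1_zero_coords[OF assms(1)] in_g1_zero_coords[OF assms(2)]
  unfolding dext_phi_decomposition wedge2_def eform_pair by (simp add: bvec_def)

lemma dext_phi_e7_e2:
  assumes "in_g1 X" "in_g1 Y"
  shows "dext x y z w A B C phi [bvec 7, bvec 2, X, Y] = dphi_comp72 z w A C [X, Y]"
  using in_g1_zero_coords[OF assms(1)] in_g1_zero_coords[OF assms(2)]
  unfolding dext_phi_decomposition wedge2_def eform_pair by (simp add: bvec_def)

definition g1_proj :: "vec \<Rightarrow> vec" where
  "g1_proj X = (\<lambda>k. if k \<in> {3..6} then X k else 0)"

lemma in_g1_g1_proj: "in_g1 (g1_proj X)"
  by (simp add: in_g1_def g1_proj_def)

lemma matapp_g1_proj: "matapp M (g1_proj X) = matapp M X"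
  unfolding matapp_def g1_proj_def by (auto intro!: sum.cong)

lemma dphi_comp_g1_proj:
  "dphi_comp12 B C [g1_proj X, g1_proj Y] = dphi_comp12 B C [X, Y]"
  "dphi_comp71 x y A B [g1_proj X, g1_proj Y] = dphi_comp71 x y A B [X, Y]"
  "dphi_comp72 z w A C [g1_proj X, g1_proj Y] = dphi_comp72 z w A C [X, Y]"
  unfolding dphi_comp12_def dphi_comp71_def dphi_comp72_def theta_pair matapp_g1_proj
    omega1_def omega2_def omega7_def eform_pair
  by (simp_all add: g1_proj_def matapp_def)

lemma dext_phi_closed_iff:
  "(\<forall>Xs. length Xs = 4 \<and> (\<forall>X\<in>set Xs. in_g X) \<longrightarrow> dext x y z w A B C phi Xs = 0) \<longleftrightarrow>
   (\<forall>X Y. in_g1 X \<and> in_g1 Y \<longrightarrow>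
      dphi_comp12 B C [X, Y] = 0 \<and> dphi_comp71 x y A B [X, Y] = 0
      \<and> dphi_comp72 z w A C [X, Y] = 0)"
    (is "?closed \<longleftrightarrow> ?comps")
proof
  assume closed: ?closed
  show ?comps
  proof (intro allI impI)
    fix X Y assume "in_g1 X \<and> in_g1 Y"
    then have g1: "in_g1 X" "in_g1 Y" and g: "in_g X" "in_g Y"
      using in_g1_imp_in_g by auto
    have "dext x y z w A B C phi [bvec 1, bvec 2, X, Y] = 0"
      "dext x y z w A B C phi [bvec 7, bvec 1, X, Y] = 0"
      "dext x y z w A B C phi [bvec 7, bvec 2, X, Y] = 0"
      using closed g by (simp_all add: in_g_bvec)
    then show "dphi_comp12 B C [X, Y] = 0 \<and> dphi_comp71 x y A B [X, Y] = 0
        \<and> dphi_comp72 z w A C [X, Y] = 0"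
      by (simp only: dext_phi_e1_e2[OF g1] dext_phi_e7_e1[OF g1] dext_phi_e7_e2[OF g1])
  qed
next
  assume comps: ?comps
  have "dphi_comp12 B C [X, Y] = 0 \<and> dphi_comp71 x y A B [X, Y] = 0
      \<and> dphi_comp72 z w A C [X, Y] = 0" for X Y
    using comps in_g1_g1_proj dphi_comp_g1_proj by metis
  then have "dext x y z w A B C phi [X0, X1, X2, X3] = 0" for X0 X1 X2 X3
    by (simp add: dext_phi_decomposition wedge2_def)
  then show ?closed
    by (auto simp: numeral_eq_Suc length_Suc_conv)
qed

theorem corollary2p5:
  fixes x y z w :: real and A B C :: mat4
  assumes "mtrace B = 0" and "mtrace C = 0"
    and "\<forall>i\<in>{3..6}. \<forall>k\<in>{3..6}. mcomm A B i k = x * B i k + y * C i k"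
    and "\<forall>i\<in>{3..6}. \<forall>k\<in>{3..6}. mcomm A C i k = z * B i k + w * C i k"
    and "\<forall>i\<in>{3..6}. \<forall>k\<in>{3..6}. mcomm B C i k = 0"
  shows "(\<forall>Xs. length Xs = 4 \<and> (\<forall>X\<in>set Xs. in_g X) \<longrightarrow> dext x y z w A B C phi Xs = 0)
     \<longleftrightarrow>
     ((\<forall>X Y. in_g1 X \<and> in_g1 Y \<longrightarrow>
         theta A omega1 [X, Y] = theta B omega7 [X, Y] + x * omega1 [X, Y] + y * omega2 [X, Y])
    \<and> (\<forall>X Y. in_g1 X \<and> in_g1 Y \<longrightarrow>
         theta A omega2 [X, Y] = theta C omega7 [X, Y] + z * omega1 [X, Y] + w * omega2 [X, Y])
    \<and> (\<forall>X Y. in_g1 X \<and> in_g1 Y \<longrightarrow>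
         theta B omega2 [X, Y] = theta C omega1 [X, Y]))"
proof -
  have "theta A omega1 [X, Y] = theta B omega7 [X, Y] + x * omega1 [X, Y] + y * omega2 [X, Y]
      \<longleftrightarrow> dphi_comp71 x y A B [X, Y] = 0"
    "theta A omega2 [X, Y] = theta C omega7 [X, Y] + z * omega1 [X, Y] + w * omega2 [X, Y]
      \<longleftrightarrow> dphi_comp72 z w A C [X, Y] = 0"
    "theta B omega2 [X, Y] = theta C omega1 [X, Y] \<longleftrightarrow> dphi_comp12 B C [X, Y] = 0"
    for X Y
    by (auto simp: dphi_comp12_def dphi_comp71_def dphi_comp72_def)
  then show ?thesis
    unfolding dext_phi_closed_iff by blast
qed

end
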